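(* Let $\mu$ be a probability measure on $\mathbb{R}$ with density $p$ that is locally absolutely continuous on $\mathbb{R}$, satisfies $p(x)=p(-x)$ for all $x$, $p'(x)\le0$ for almost every $x>0$, and $\lim_{x\to\infty}p(x)\log x=0$. Then $\operatorname{Re}G_\mu(x+yi)>0$ for all $x>0$, $y>0$.
   Context: $G_\mu(z)=\int_{\mathbb{R}}\frac{1}{z-u}\mu(du)$ for $z\in\mathbb{C}^+$ is the Cauchy transform of $\mu$. *)

theory Defs
  imports "HOL-Probability.Probability"
begin

definition ac_on_interval :: "real \<Rightarrow> real \<Rightarrow> (real \<Rightarrow> real) \<Rightarrow> bool" where
  "ac_on_interval a b f \<longleftrightarrow>
     (\<forall>\<epsilon>>0. \<exists>\<delta>>0. \<forall>(n::nat) (l::nat \<Rightarrow> real) (r::nat \<Rightarrow> real).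
        (\<forall>i<n. a \<le> l i \<and> l i < r i \<and> r i \<le> b) \<and>
        (\<forall>i<n. \<forall>j<n. i \<noteq> j \<longrightarrow> r i \<le> l j \<or> r j \<le> l i) \<and>
        (\<Sum>i<n. r i - l i) < \<delta>
        \<longrightarrow> (\<Sum>i<n. \<bar>f (r i) - f (l i)\<bar>) < \<epsilon>)"

definition locally_abs_cont :: "(real \<Rightarrow> real) \<Rightarrow> bool" where
  "locally_abs_cont f \<longleftrightarrow> (\<forall>a b. a \<le> b \<longrightarrow> ac_on_interval a b f)"

definition cauchy_transform :: "real measure \<Rightarrow> complex \<Rightarrow> complex" where
  "cauchy_transform \<mu> z = (LINT u|\<mu>. 1 / (z - complex_of_real u))"

end

theory Submission
  imports Defs
begin

(* Writing z = x + iy, Re G(z) is the integral of p(u) k(x - u) against the odd kernel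
   k(s) = s / (s^2 + y^2).  Substituting u = x - s and pairing s with -s turns it into
   1/2 times the integral of k(s) (p(x - s) - p(x + s)).  A locally absolutely continuous
   function whose derivative is a.e. nonpositive on (0, oo) is nonincreasing there, so by
   symmetry p is nonincreasing in |u|; since |x - s| <= |x + s| for s >= 0, the integrand is
   nonnegative.  It is positive somewhere: p(0) > 0 because p has mass one, while the tail
   condition forces p -> 0, so p drops strictly between two consecutive points of the grid
   2x N.  Continuity of p then makes the integral strictly positive. *)

hide_const (open) Polynomial.content \<comment> \<open>clashes with the content of intervals\<close>

section \<open>Absolutely continuous functions with nonpositive derivative\<close>

lemma locally_abs_cont_imp_isCont:
  assumes "locally_abs_cont f"
  shows "isCont f x"
proof (rule continuous_at_eps_delta[THEN iffD2], intro allI impI)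
  fix \<epsilon> :: real assume "\<epsilon> > 0"
  moreover have "ac_on_interval (x - 1) (x + 1) f"
    using assms unfolding locally_abs_cont_def by auto
  ultimately obtain \<delta> where \<delta>: "\<delta> > 0" and ac: "\<forall>(n::nat) l r.
        (\<forall>i<n. x - 1 \<le> l i \<and> l i < r i \<and> r i \<le> x + 1) \<and>
        (\<forall>i<n. \<forall>j<n. i \<noteq> j \<longrightarrow> r i \<le> l j \<or> r j \<le> l i) \<and>
        (\<Sum>i<n. r i - l i) < \<delta> \<longrightarrow> (\<Sum>i<n. \<bar>f (r i) - f (l i)\<bar>) < \<epsilon>"
    unfolding ac_on_interval_def by blast
  show "\<exists>d>0. \<forall>y. dist y x < d \<longrightarrow> dist (f y) (f x) < \<epsilon>"
  proof (intro exI[of _ "min \<delta> 1"] conjI allI impI)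
    fix y assume y: "dist y x < min \<delta> 1"
    show "dist (f y) (f x) < \<epsilon>"
    proof (cases "y = x")
      case False
      have "(\<Sum>i<Suc 0. \<bar>f ((\<lambda>_. max x y) i) - f ((\<lambda>_. min x y) i)\<bar>) < \<epsilon>"
        using y False by (intro ac[rule_format]) (auto simp: dist_real_def)
      thus ?thesis by (auto simp: dist_real_def max_def min_def abs_minus_commute split: if_splits)
    qed (use \<open>\<epsilon> > 0\<close> in simp)
  qed (use \<delta> in simp)
qed

lemma ac_on_interval_finite_family:
  assumes "ac_on_interval a b f" "\<epsilon> > 0"
  shows "\<exists>\<delta>>0. \<forall>(I :: 'i set) l r. finite I \<and> (\<forall>i\<in>I. a \<le> l i \<and> l i < r i \<and> r i \<le> b) \<and>
           (\<forall>i\<in>I. \<forall>j\<in>I. i \<noteq> j \<longrightarrow> r i \<le> l j \<or> r j \<le> l i) \<and> (\<Sum>i\<in>I. r i - l i) < \<delta> \<longrightarrow>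
           (\<Sum>i\<in>I. \<bar>f (r i) - f (l i)\<bar>) < \<epsilon>"
proof -
  obtain \<delta> where \<delta>: "\<delta> > 0" and ac: "\<forall>(n::nat) l r.
        (\<forall>i<n. a \<le> l i \<and> l i < r i \<and> r i \<le> b) \<and>
        (\<forall>i<n. \<forall>j<n. i \<noteq> j \<longrightarrow> r i \<le> l j \<or> r j \<le> l i) \<and>
        (\<Sum>i<n. r i - l i) < \<delta> \<longrightarrow> (\<Sum>i<n. \<bar>f (r i) - f (l i)\<bar>) < \<epsilon>"
    using assms unfolding ac_on_interval_def by blast
  show ?thesis
  proof (intro exI[of _ \<delta>] conjI allI impI, fact \<delta>, elim conjE)
    fix I :: "'i set" and l r
    assume I: "finite I" and bounds: "\<forall>i\<in>I. a \<le> l i \<and> l i < r i \<and> r i \<le> b"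
      and sep: "\<forall>i\<in>I. \<forall>j\<in>I. i \<noteq> j \<longrightarrow> r i \<le> l j \<or> r j \<le> l i"
      and small: "(\<Sum>i\<in>I. r i - l i) < \<delta>"
    obtain h where h: "bij_betw h {..<card I} I"
      using ex_bij_betw_nat_finite[OF I] by (auto simp: atLeast0LessThan)
    have hI: "h i \<in> I" if "i < card I" for i
      using h that by (auto dest: bij_betwE)
    have h_inj: "h i \<noteq> h j" if "i < card I" "j < card I" "i \<noteq> j" for i j
      using h that by (auto simp: bij_betw_def inj_on_def)
    have reindex: "(\<Sum>i<card I. g (h i)) = (\<Sum>i\<in>I. g i)" for g :: "'i \<Rightarrow> real"
      using sum.reindex_bij_betw[OF h] .
    have "(\<Sum>i<card I. r (h i) - l (h i)) < \<delta>"
      using small reindex[of "\<lambda>i. r i - l i"] by simp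
    hence "(\<Sum>i<card I. \<bar>f (r (h i)) - f (l (h i))\<bar>) < \<epsilon>"
      using hI h_inj bounds sep by (intro ac[rule_format]) auto
    thus "(\<Sum>i\<in>I. \<bar>f (r i) - f (l i)\<bar>) < \<epsilon>"
      using reindex[of "\<lambda>i. \<bar>f (r i) - f (l i)\<bar>"] by simp
  qed
qed

lemma tagged_division_of_real_interval:
  assumes "P tagged_division_of {a..b::real}" "(x, K) \<in> P"
  shows "{Inf K..Sup K} = K" "Inf K \<le> x" "x \<le> Sup K" "a \<le> Inf K" "Sup K \<le> b"
proof -
  obtain u v where K: "K = {u..v}"
    using tagged_division_ofD(4)[OF assms] by (metis cbox_interval)
  have "x \<in> K" "K \<subseteq> {a..b}"
    using tagged_division_ofD(2,3)[OF assms] by auto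
  hence "u \<le> v" "Inf K = u" "Sup K = v" using K by auto
  thus "{Inf K..Sup K} = K" "Inf K \<le> x" "x \<le> Sup K" "a \<le> Inf K" "Sup K \<le> b"
    using K \<open>x \<in> K\<close> \<open>K \<subseteq> {a..b}\<close> by auto
qed

lemma separated_if_disjoint_interior:
  fixes l r l' r' :: real
  assumes "interior {l..r} \<inter> interior {l'..r'} = {}" "l < r" "l' < r'"
  shows "r \<le> l' \<or> r' \<le> l"
proof (rule ccontr)
  assume "\<not> (r \<le> l' \<or> r' \<le> l)"
  hence "(max l l' + min r r') / 2 \<in> interior {l..r} \<inter> interior {l'..r'}"
    using assms(2,3) by (auto simp: max_def min_def)
  thus False using assms(1) by blast
qed

lemma ac_on_interval_tagged_division:
  assumes "ac_on_interval a b f" "\<epsilon> > 0"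
  shows "\<exists>\<delta>>0. \<forall>P Q. P tagged_division_of {a..b} \<and> Q \<subseteq> P \<and> (\<Sum>(x, K)\<in>Q. content K) < \<delta> \<longrightarrow>
           (\<Sum>(x, K)\<in>Q. f (Sup K) - f (Inf K)) < \<epsilon>"
proof -
  obtain \<delta> where \<delta>: "\<delta> > 0" and family: "\<forall>(I :: (real \<times> real set) set) l r.
       finite I \<and> (\<forall>i\<in>I. a \<le> l i \<and> l i < r i \<and> r i \<le> b) \<and>
       (\<forall>i\<in>I. \<forall>j\<in>I. i \<noteq> j \<longrightarrow> r i \<le> l j \<or> r j \<le> l i) \<and> (\<Sum>i\<in>I. r i - l i) < \<delta> \<longrightarrow>
       (\<Sum>i\<in>I. \<bar>f (r i) - f (l i)\<bar>) < \<epsilon>"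
    using ac_on_interval_finite_family[OF assms] by blast
  show ?thesis
  proof (intro exI[of _ \<delta>] conjI allI impI, fact \<delta>, elim conjE)
    fix P Q assume P: "P tagged_division_of {a..b}" and QP: "Q \<subseteq> P"
      and small: "(\<Sum>(x, K)\<in>Q. content K) < \<delta>"
    note interval = tagged_division_of_real_interval[OF P subsetD[OF QP]]
    define R where "R = {(x, K) \<in> Q. Inf K < Sup K}"
    have finQ: "finite Q" using finite_subset[OF QP tagged_division_of_finite[OF P]] .
    have RQ: "R \<subseteq> Q" unfolding R_def by auto
    have R: "{Inf (snd q)..Sup (snd q)} = snd q" "a \<le> Inf (snd q)" "Inf (snd q) < Sup (snd q)"
      "Sup (snd q) \<le> b" if "q \<in> R" for q
      using that interval[of "fst q" "snd q"] unfolding R_def by auto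
    have degenerate: "Inf K = Sup K" if "(x, K) \<in> Q - R" for x K
      using that interval[of x K] unfolding R_def by auto
    have "(\<Sum>(x, K)\<in>Q. f (Sup K) - f (Inf K)) = (\<Sum>q\<in>R. f (Sup (snd q)) - f (Inf (snd q)))"
      by (intro sum.mono_neutral_cong_right[OF finQ RQ]) (auto simp: degenerate)
    also have "\<dots> \<le> (\<Sum>q\<in>R. \<bar>f (Sup (snd q)) - f (Inf (snd q))\<bar>)"
      by (rule sum_mono) simp
    also have "\<dots> < \<epsilon>"
    proof (rule family[rule_format], intro conjI)
      show "finite R" using finite_subset[OF RQ finQ] .
      show "\<forall>q\<in>R. a \<le> Inf (snd q) \<and> Inf (snd q) < Sup (snd q) \<and> Sup (snd q) \<le> b"
        using R by blast
      show "\<forall>q\<in>R. \<forall>q'\<in>R. q \<noteq> q' \<longrightarrow> Sup (snd q) \<le> Inf (snd q') \<or> Sup (snd q') \<le> Inf (snd q)"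
      proof (intro ballI impI)
        fix q q' assume "q \<in> R" "q' \<in> R" "q \<noteq> q'"
        have "interior (snd q) \<inter> interior (snd q') = {}"
          using tagged_division_ofD(5)[OF P, of "fst q" "snd q" "fst q'" "snd q'"] \<open>q \<noteq> q'\<close>
            RQ QP \<open>q \<in> R\<close> \<open>q' \<in> R\<close> by auto
        hence "interior {Inf (snd q)..Sup (snd q)} \<inter> interior {Inf (snd q')..Sup (snd q')} = {}"
          using R(1)[OF \<open>q \<in> R\<close>] R(1)[OF \<open>q' \<in> R\<close>] by metis
        thus "Sup (snd q) \<le> Inf (snd q') \<or> Sup (snd q') \<le> Inf (snd q)"
          by (rule separated_if_disjoint_interior) (use R \<open>q \<in> R\<close> \<open>q' \<in> R\<close> in auto)
      qed
      have "(\<Sum>q\<in>R. Sup (snd q) - Inf (snd q)) = (\<Sum>q\<in>R. content (snd q))"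
      proof (rule sum.cong)
        fix q assume "q \<in> R"
        thus "Sup (snd q) - Inf (snd q) = content (snd q)"
          using R[OF \<open>q \<in> R\<close>] by (metis content_real less_imp_le)
      qed simp
      also have "\<dots> \<le> (\<Sum>(x, K)\<in>Q. content K)"
        using finQ RQ by (simp add: case_prod_unfold sum_mono2)
      finally show "(\<Sum>q\<in>R. Sup (snd q) - Inf (snd q)) < \<delta>" using small by simp
    qed
    finally show "(\<Sum>(x, K)\<in>Q. f (Sup K) - f (Inf K)) < \<epsilon>" .
  qed
qed

lemma nonpos_derivative_local_increment_bound:
  fixes f :: "real \<Rightarrow> real"
  assumes "(f has_real_derivative D) (at x)" "D \<le> 0" "\<eta> > 0"
  shows "\<exists>d>0. \<forall>u v. x - d < u \<and> u \<le> x \<and> x \<le> v \<and> v < x + d \<longrightarrow> f v - f u \<le> \<eta> * (v - u)"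
proof -
  have "(f has_derivative (\<lambda>h. D * h)) (at x)"
    using assms(1) by (simp add: has_field_derivative_def)
  then obtain d where d: "d > 0" and
    approx: "\<forall>y. norm (y - x) < d \<longrightarrow> norm (f y - f x - D * (y - x)) \<le> \<eta> * norm (y - x)"
    using assms(3) unfolding has_derivative_at_alt by blast
  show ?thesis
  proof (intro exI[of _ d] conjI allI impI, fact d, elim conjE)
    fix u v assume "x - d < u" "u \<le> x" "x \<le> v" "v < x + d"
    moreover have "D * (v - x) \<le> 0" "D * (x - u) \<le> 0"
      using \<open>u \<le> x\<close> \<open>x \<le> v\<close> assms(2) by (simp_all add: mult_nonpos_nonneg)
    ultimately show "f v - f u \<le> \<eta> * (v - u)"
      using approx[rule_format, of u] approx[rule_format, of v] by (auto simp: algebra_simps abs_le_iff)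
  qed
qed

lemma negligible_tags_fine_division:
  fixes a b :: real
  assumes "negligible B" "gauge \<gamma>" "e > 0"
  obtains P where "P tagged_division_of {a..b}" "\<gamma> fine P"
    "(\<Sum>(x, K)\<in>{(x, K) \<in> P. x \<in> B}. content K) < e"
proof -
  have "((indicator B :: real \<Rightarrow> real) has_integral 0) {a..b}"
    using assms(1) unfolding negligible_def by (metis box_real(2))
  from has_integral_real[THEN iffD1, rule_format, OF this assms(3)]
  obtain \<gamma>' where "gauge \<gamma>'" and small: "\<forall>P. P tagged_division_of {a..b} \<and> \<gamma>' fine P \<longrightarrow>
      norm ((\<Sum>(x, K)\<in>P. content K *\<^sub>R (indicator B x :: real)) - 0) < e"
    by blast
  obtain P where P: "P tagged_division_of {a..b}" "(\<lambda>x. \<gamma> x \<inter> \<gamma>' x) fine P"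
    using fine_division_exists_real[OF gauge_Int[OF assms(2) \<open>gauge \<gamma>'\<close>]] .
  have "(\<Sum>(x, K)\<in>{(x, K) \<in> P. x \<in> B}. content K) = (\<Sum>(x, K)\<in>P. content K *\<^sub>R (indicator B x :: real))"
    by (intro sum.mono_neutral_cong_left[OF tagged_division_of_finite[OF P(1)]])
      (auto simp: indicator_def)
  also have "\<dots> < e"
    using small[rule_format, OF conjI[OF P(1) fine_Int[THEN iffD1, OF P(2), THEN conjunct2]]]
    by simp
  finally show thesis
    using that[OF P(1) fine_Int[THEN iffD1, OF P(2), THEN conjunct1]] by blast
qed

lemma tagged_increment_le_if_local_bound:
  fixes f :: "real \<Rightarrow> real"
  assumes P: "P tagged_division_of {a..b}" and xK: "(x, K) \<in> P" and "K \<subseteq> ball x d"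
    and bound: "\<forall>u v. x - d < u \<and> u \<le> x \<and> x \<le> v \<and> v < x + d \<longrightarrow> f v - f u \<le> \<eta> * (v - u)"
  shows "f (Sup K) - f (Inf K) \<le> \<eta> * content K"
proof -
  note I = tagged_division_of_real_interval[OF P xK]
  have le: "Inf K \<le> Sup K" using I by linarith
  hence "Inf K \<in> {Inf K..Sup K}" "Sup K \<in> {Inf K..Sup K}" by auto
  hence "Inf K \<in> ball x d" "Sup K \<in> ball x d" unfolding I(1) using \<open>K \<subseteq> ball x d\<close> by auto
  hence "x - d < Inf K" "Sup K < x + d" by (auto simp: dist_real_def)
  hence "f (Sup K) - f (Inf K) \<le> \<eta> * (Sup K - Inf K)"
    using bound I(2,3) by blast
  thus ?thesis using content_real[OF le] I(1) by simp
qed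

lemma AE_nonpos_derivative_local_increment_bounds:
  fixes f :: "real \<Rightarrow> real"
  assumes "AE x in lborel. a < x \<and> x < b \<longrightarrow> (\<exists>D. (f has_real_derivative D) (at x) \<and> D \<le> 0)"
    and "\<eta> > 0"
  obtains B d where "negligible B" "\<forall>x\<in>{a..b} - B. d x > 0 \<and>
      (\<forall>u v. x - d x < u \<and> u \<le> x \<and> x \<le> v \<and> v < x + d x \<longrightarrow> f v - f u \<le> \<eta> * (v - u))"
proof -
  obtain N where N: "{x \<in> space lborel. \<not> (a < x \<and> x < b \<longrightarrow>
        (\<exists>D. (f has_real_derivative D) (at x) \<and> D \<le> 0))} \<subseteq> N"
      "emeasure lborel N = 0" "N \<in> sets lborel"
    using assms(1) by (rule AE_E)
  define B where "B = insert a (insert b N)"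
  have "N \<in> null_sets lebesgue"
    using N(2,3) by (intro null_sets_completionI) (auto intro: null_setsI)
  hence "negligible B" unfolding B_def by (simp add: negligible_iff_null_sets)
  have "\<exists>d>0. \<forall>u v. x - d < u \<and> u \<le> x \<and> x \<le> v \<and> v < x + d \<longrightarrow> f v - f u \<le> \<eta> * (v - u)"
    if "x \<in> {a..b} - B" for x
  proof -
    from that have "a < x" "x < b" "x \<notin> N" unfolding B_def by auto
    then obtain D where "(f has_real_derivative D) (at x)" "D \<le> 0" using N(1) by auto
    thus ?thesis using nonpos_derivative_local_increment_bound \<open>\<eta> > 0\<close> by blast
  qed
  then obtain d where "\<forall>x\<in>{a..b} - B. d x > 0 \<and> (\<forall>u v. x - d x < u \<and> u \<le> x \<and> x \<le> v \<and>
      v < x + d x \<longrightarrow> f v - f u \<le> \<eta> * (v - u))"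
    using bchoice[of "{a..b} - B"] by (metis (no_types, lifting))
  with \<open>negligible B\<close> show thesis by (rule that)
qed

text \<open>At tags outside the null set the derivative bounds each increment by \<open>\<eta>\<close> times the length;
  the intervals with tags in the null set have small total length, so absolute continuity bounds
  their increments by \<open>\<epsilon>\<close>.\<close>
lemma ac_on_interval_nonpos_derivative_increment_le:
  fixes f :: "real \<Rightarrow> real"
  assumes ac: "ac_on_interval a b f" and "a \<le> b"
    and deriv: "AE x in lborel. a < x \<and> x < b \<longrightarrow> (\<exists>D. (f has_real_derivative D) (at x) \<and> D \<le> 0)"
    and "\<eta> > 0" "\<epsilon> > 0"
  shows "f b - f a \<le> \<eta> * (b - a) + \<epsilon>"
proof -
  obtain B d where "negligible B" and d: "\<forall>x\<in>{a..b} - B. d x > 0 \<and>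
      (\<forall>u v. x - d x < u \<and> u \<le> x \<and> x \<le> v \<and> v < x + d x \<longrightarrow> f v - f u \<le> \<eta> * (v - u))"
    using AE_nonpos_derivative_local_increment_bounds[OF deriv \<open>\<eta> > 0\<close>] .
  obtain \<delta> where "\<delta> > 0" and ac_small: "\<forall>P Q. P tagged_division_of {a..b} \<and> Q \<subseteq> P \<and>
      (\<Sum>(x, K)\<in>Q. content K) < \<delta> \<longrightarrow> (\<Sum>(x, K)\<in>Q. f (Sup K) - f (Inf K)) < \<epsilon>"
    using ac_on_interval_tagged_division[OF ac \<open>\<epsilon> > 0\<close>] by blast
  define \<gamma> where "\<gamma> x = ball x (if x \<in> {a..b} - B then d x else 1)" for x
  have "gauge \<gamma>" using d unfolding gauge_def \<gamma>_def by auto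
  obtain P where P: "P tagged_division_of {a..b}" "\<gamma> fine P"
    and small: "(\<Sum>(x, K)\<in>{(x, K) \<in> P. x \<in> B}. content K) < \<delta>"
    using negligible_tags_fine_division[OF \<open>negligible B\<close> \<open>gauge \<gamma>\<close> \<open>\<delta> > 0\<close>] .
  define Q where "Q = {(x, K) \<in> P. x \<in> B}"
  have finP: "finite P" using tagged_division_of_finite[OF P(1)] .
  have QP: "Q \<subseteq> P" unfolding Q_def by auto
  have good: "f (Sup K) - f (Inf K) \<le> \<eta> * content K" if "(x, K) \<in> P - Q" for x K
  proof (rule tagged_increment_le_if_local_bound[OF P(1)])
    have x: "x \<in> {a..b} - B"
      using that tagged_division_of_real_interval[OF P(1), of x K] unfolding Q_def by auto
    show "(x, K) \<in> P" using that by blast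
    have "K \<subseteq> \<gamma> x" using P(2) that unfolding fine_def by blast
    thus "K \<subseteq> ball x (d x)" using x unfolding \<gamma>_def by simp
    show "\<forall>u v. x - d x < u \<and> u \<le> x \<and> x \<le> v \<and> v < x + d x \<longrightarrow> f v - f u \<le> \<eta> * (v - u)"
      using d x by blast
  qed
  have bad: "(\<Sum>(x, K)\<in>Q. f (Sup K) - f (Inf K)) < \<epsilon>"
    using ac_small P(1) QP small unfolding Q_def by blast
  have "f b - f a = (\<Sum>(x, K)\<in>P. f (Sup K) - f (Inf K))"
    using additive_tagged_division_1[OF \<open>a \<le> b\<close> P(1), of f] by simp
  also have "\<dots> = (\<Sum>(x, K)\<in>P - Q. f (Sup K) - f (Inf K)) + (\<Sum>(x, K)\<in>Q. f (Sup K) - f (Inf K))"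
    using sum.subset_diff[OF QP finP] by simp
  also have "\<dots> \<le> (\<Sum>(x, K)\<in>P - Q. \<eta> * content K) + \<epsilon>"
    using good bad by (intro add_mono sum_mono) auto
  also have "(\<Sum>(x, K)\<in>P - Q. \<eta> * content K) \<le> (\<Sum>(x, K)\<in>P. \<eta> * content K)"
    using finP \<open>\<eta> > 0\<close> by (intro sum_mono2) auto
  also have "\<dots> = \<eta> * (b - a)"
    using additive_content_tagged_division[of P a b] P(1) \<open>a \<le> b\<close>
    by (simp add: sum_distrib_left[symmetric] case_prod_unfold)
  finally show ?thesis by simp
qed

lemma ac_on_interval_nonpos_derivative_imp_le:
  fixes f :: "real \<Rightarrow> real"
  assumes ac: "ac_on_interval a b f" and "a \<le> b"
    and deriv: "AE x in lborel. a < x \<and> x < b \<longrightarrow> (\<exists>D. (f has_real_derivative D) (at x) \<and> D \<le> 0)"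
  shows "f b \<le> f a"
proof (rule field_le_epsilon)
  fix e :: real assume "e > 0"
  define \<eta> where "\<eta> = e / (2 * (b - a + 1))"
  have "\<eta> > 0" using \<open>e > 0\<close> \<open>a \<le> b\<close> by (simp add: \<eta>_def)
  hence "f b - f a \<le> \<eta> * (b - a) + e / 2"
    using \<open>e > 0\<close> by (intro ac_on_interval_nonpos_derivative_increment_le[OF ac \<open>a \<le> b\<close> deriv]) auto
  moreover have "\<eta> * (b - a) \<le> e / 2"
    using \<open>e > 0\<close> \<open>a \<le> b\<close> by (simp add: \<eta>_def field_simps)
  ultimately show "f b \<le> f a + e" by linarith
qed

lemma locally_abs_cont_antimono_nonneg:
  fixes f :: "real \<Rightarrow> real"
  assumes "locally_abs_cont f"
    and "AE x in lborel. x > 0 \<longrightarrow> (\<exists>D. (f has_real_derivative D) (at x) \<and> D \<le> 0)"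
    and "0 \<le> a" "a \<le> b"
  shows "f b \<le> f a"
proof (rule ac_on_interval_nonpos_derivative_imp_le[of a b f])
  show "ac_on_interval a b f" using assms(1,4) unfolding locally_abs_cont_def by blast
  show "AE x in lborel. a < x \<and> x < b \<longrightarrow> (\<exists>D. (f has_real_derivative D) (at x) \<and> D \<le> 0)"
    using assms(2) by eventually_elim (use \<open>0 \<le> a\<close> in auto)
qed fact

section \<open>Integrals against odd kernels\<close>

lemma integral_odd_kernel_symmetrize:
  fixes p k :: "real \<Rightarrow> real"
  assumes p: "integrable lborel p" and [measurable]: "k \<in> borel_measurable borel"
    and bound: "\<And>s. \<bar>k s\<bar> \<le> C" and odd: "\<And>s. k (- s) = - k s"
  shows "integrable lborel (\<lambda>s. k s * (p (x - s) - p (x + s)))"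
    and "(LINT s|lborel. k s * (p (x - s) - p (x + s))) = 2 * (LINT u|lborel. p u * k (x - u))"
proof -
  have [measurable]: "p \<in> borel_measurable borel"
    using borel_measurable_integrable[OF p] by simp
  define h where "h s = p (x - s) * k s" for s
  have [measurable]: "h \<in> borel_measurable borel" unfolding h_def by measurable
  have "integrable lborel (\<lambda>s. C * p (x - s))"
    using lborel_integrable_real_affine_iff[of "-1" p x] p by simp
  hence h_int: "integrable lborel h"
  proof (rule Bochner_Integration.integrable_bound)
    show "AE s in lborel. norm (h s) \<le> norm (C * p (x - s))"
    proof (rule AE_I2)
      fix s
      have "\<bar>k s\<bar> \<le> \<bar>C\<bar>" using bound[of s] by linarith
      thus "norm (h s) \<le> norm (C * p (x - s))"
        unfolding h_def using mult_left_mono[of "\<bar>k s\<bar>" "\<bar>C\<bar>" "\<bar>p (x - s)\<bar>"]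
        by (simp add: abs_mult mult.commute)
    qed
  qed simp
  have h_minus_int: "integrable lborel (\<lambda>s. h (- s))"
    using lborel_integrable_real_affine_iff[of "-1" h 0] h_int by simp
  have sym: "h s + h (- s) = k s * (p (x - s) - p (x + s))" for s
    unfolding h_def odd by (simp add: algebra_simps)
  show "integrable lborel (\<lambda>s. k s * (p (x - s) - p (x + s)))"
    using Bochner_Integration.integrable_add[OF h_int h_minus_int] by (simp add: sym)
  have "(LINT s|lborel. k s * (p (x - s) - p (x + s))) = (LINT s|lborel. h s) + (LINT s|lborel. h (- s))"
    unfolding sym[symmetric] by (rule Bochner_Integration.integral_add[OF h_int h_minus_int])
  also have "(LINT s|lborel. h (- s)) = (LINT s|lborel. h s)"
    using lborel_integral_real_affine[of "-1" h 0] by simp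
  also have "(LINT s|lborel. h s) = (LINT u|lborel. p u * k (x - u))"
    using lborel_integral_real_affine[of "-1" "\<lambda>u. p u * k (x - u)" x] by (simp add: h_def)
  finally show "(LINT s|lborel. k s * (p (x - s) - p (x + s))) = 2 * (LINT u|lborel. p u * k (x - u))"
    by simp
qed

lemma odd_kernel_mul_symmetric_difference_nonneg:
  fixes p k :: "real \<Rightarrow> real"
  assumes anti: "\<And>s t. \<bar>s\<bar> \<le> \<bar>t\<bar> \<Longrightarrow> p t \<le> p s" and "0 \<le> x"
    and k_nonneg: "\<And>s. 0 \<le> s \<Longrightarrow> 0 \<le> k s" and odd: "\<And>s. k (- s) = - k s"
  shows "0 \<le> k s * (p (x - s) - p (x + s))"
proof (cases "0 \<le> s")
  case True
  thus ?thesis using anti[of "x - s" "x + s"] k_nonneg[of s] \<open>0 \<le> x\<close> by simp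
next
  case False
  hence "k s \<le> 0" using k_nonneg[of "- s"] odd[of s] by simp
  thus ?thesis using anti[of "x + s" "x - s"] False \<open>0 \<le> x\<close> by (simp add: mult_nonpos_nonpos)
qed

lemma integral_pos_if_continuous_nonneg:
  fixes g :: "real \<Rightarrow> real"
  assumes "integrable lborel g" "continuous_on UNIV g" "\<And>s. 0 \<le> g s" "0 < g s0"
  shows "0 < (LINT s|lborel. g s)"
proof -
  obtain r where "r > 0" and r: "\<And>s. dist s s0 < r \<Longrightarrow> dist (g s) (g s0) < g s0"
    using assms(2,4) unfolding continuous_on_iff by (metis UNIV_I)
  have "(LINT s|lborel. g s) \<noteq> 0"
  proof
    assume "(LINT s|lborel. g s) = 0"
    hence "AE s in lborel. g s = 0"
      using integral_nonneg_eq_0_iff_AE[OF assms(1)] assms(3) by simp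
    then obtain N where N: "{s \<in> space lborel. g s \<noteq> 0} \<subseteq> N" "emeasure lborel N = 0" "N \<in> sets lborel"
      by (rule AE_E)
    have "{s0 - r<..<s0 + r} \<subseteq> N"
    proof
      fix s assume "s \<in> {s0 - r<..<s0 + r}"
      hence "dist (g s) (g s0) < g s0" by (intro r) (auto simp: dist_real_def)
      hence "g s \<noteq> 0" by (auto simp: dist_real_def)
      thus "s \<in> N" using N(1) by auto
    qed
    hence "emeasure lborel {s0 - r<..<s0 + r} \<le> emeasure lborel N"
      using N(3) by (rule emeasure_mono)
    thus False using N(2) \<open>r > 0\<close> by simp
  qed
  moreover have "0 \<le> (LINT s|lborel. g s)" using assms(3) by simp
  ultimately show ?thesis by simp
qed

section \<open>The Cauchy transform of a symmetric unimodal density\<close>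

lemma tendsto_zero_if_mult_ln_tendsto_zero:
  fixes p :: "real \<Rightarrow> real"
  assumes "\<And>x. p x \<ge> 0" "((\<lambda>x. p x * ln x) \<longlongrightarrow> 0) at_top"
  shows "(p \<longlongrightarrow> 0) at_top"
proof (rule tendsto_sandwich[OF _ _ tendsto_const assms(2)])
  show "\<forall>\<^sub>F x in at_top. 0 \<le> p x" using assms(1) by simp
  show "\<forall>\<^sub>F x in at_top. p x \<le> p x * ln x"
    using eventually_ge_at_top[of "exp 1"]
  proof eventually_elim
    fix x :: real assume "exp 1 \<le> x"
    hence "1 \<le> ln x" by (metis exp_gt_zero ln_exp ln_le_cancel_iff order_less_le_trans)
    thus "p x \<le> p x * ln x" using assms(1)[of x] by (metis mult_left_mono mult.right_neutral)
  qed
qed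

lemma tendsto_zero_imp_decrease_on_grid:
  fixes p :: "real \<Rightarrow> real"
  assumes "p 0 > 0" "(p \<longlongrightarrow> 0) at_top" "c > 0"
  obtains j :: nat where "p (c * (real j + 1)) < p (c * real j)"
proof (rule ccontr)
  assume "\<not> thesis"
  hence step: "p (c * real j) \<le> p (c * (real j + 1))" for j
    using that by (meson not_le)
  have ge: "p 0 \<le> p (c * real j)" for j
  proof (induction j)
    case (Suc j) thus ?case using step[of j] by (simp add: add.commute)
  qed simp
  have "filterlim (\<lambda>j::nat. c * real j) at_top sequentially"
    using assms(3) by (intro filterlim_tendsto_pos_mult_at_top[OF tendsto_const] filterlim_real_sequentially)
  hence "(\<lambda>j. p (c * real j)) \<longlonglongrightarrow> 0" by (rule filterlim_compose[OF assms(2)])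
  hence "p 0 \<le> 0" by (rule tendsto_lowerbound) (use ge in auto)
  thus False using assms(1) by simp
qed

text \<open>Up to the factor \<open>1 / pi\<close>, the conjugate Poisson kernel of the upper half plane.\<close>
definition conj_poisson_kernel :: "real \<Rightarrow> real \<Rightarrow> real" where
  "conj_poisson_kernel y s = s / (s\<^sup>2 + y\<^sup>2)"

lemma Re_inverse_Complex_minus_of_real:
  "Re (1 / (Complex x y - complex_of_real u)) = conj_poisson_kernel y (x - u)"
  unfolding conj_poisson_kernel_def by (simp add: Re_divide power2_eq_square)

lemma conj_poisson_kernel_minus: "conj_poisson_kernel y (- s) = - conj_poisson_kernel y s"
  unfolding conj_poisson_kernel_def by simp

lemma conj_poisson_kernel_pos: "s > 0 \<Longrightarrow> conj_poisson_kernel y s > 0"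
  unfolding conj_poisson_kernel_def by (simp add: add_pos_nonneg)

lemma conj_poisson_kernel_nonneg: "s \<ge> 0 \<Longrightarrow> conj_poisson_kernel y s \<ge> 0"
  unfolding conj_poisson_kernel_def by simp

lemma abs_conj_poisson_kernel_le:
  assumes "y > 0"
  shows "\<bar>conj_poisson_kernel y s\<bar> \<le> 1 / y"
proof -
  have "2 * \<bar>s\<bar> * y \<le> s\<^sup>2 + y\<^sup>2"
    using sum_squares_ge_zero[of "\<bar>s\<bar> - y" 0]
    by (simp add: power2_eq_square algebra_simps)
  moreover have "0 \<le> \<bar>s\<bar> * y" using assms by simp
  ultimately have "\<bar>s\<bar> * y \<le> s\<^sup>2 + y\<^sup>2" by linarith
  moreover have "s\<^sup>2 + y\<^sup>2 > 0" using assms by (simp add: add_nonneg_pos)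
  ultimately show ?thesis
    using assms unfolding conj_poisson_kernel_def by (simp add: abs_div field_simps)
qed

lemma continuous_on_conj_poisson_kernel:
  assumes "y \<noteq> 0"
  shows "continuous_on UNIV (conj_poisson_kernel y)"
proof -
  have "s\<^sup>2 + y\<^sup>2 \<noteq> 0" for s using assms by (simp add: add_nonneg_pos order.strict_iff_not)
  thus ?thesis unfolding conj_poisson_kernel_def[abs_def] by (intro continuous_intros) auto
qed

lemma Re_cauchy_transform_density:
  fixes p :: "real \<Rightarrow> real"
  assumes prob: "prob_space (density lborel (\<lambda>x. ennreal (p x)))" and nonneg: "\<And>x. p x \<ge> 0"
    and [measurable]: "p \<in> borel_measurable borel" and "y > 0"
  shows "Re (cauchy_transform (density lborel (\<lambda>x. ennreal (p x))) (Complex x y))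
           = (LINT u|lborel. p u * conj_poisson_kernel y (x - u))"
proof -
  interpret prob_space "density lborel (\<lambda>x. ennreal (p x))" by (rule prob)
  have "integrable (density lborel (\<lambda>x. ennreal (p x))) (\<lambda>u. 1 / (Complex x y - complex_of_real u))"
  proof (rule integrable_const_bound[where B = "1 / y"])
    show "AE u in density lborel (\<lambda>x. ennreal (p x)). norm (1 / (Complex x y - complex_of_real u)) \<le> 1 / y"
    proof (rule AE_I2)
      fix u
      have "y \<le> norm (Complex x y - complex_of_real u)"
        using abs_Im_le_cmod[of "Complex x y - complex_of_real u"] \<open>y > 0\<close> by simp
      thus "norm (1 / (Complex x y - complex_of_real u)) \<le> 1 / y"
        using \<open>y > 0\<close> by (simp add: norm_divide divide_simps)
    qed
  qed simp
  hence "Re (cauchy_transform (density lborel (\<lambda>x. ennreal (p x))) (Complex x y))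
           = (LINT u|density lborel (\<lambda>x. ennreal (p x)). Re (1 / (Complex x y - complex_of_real u)))"
    unfolding cauchy_transform_def by simp
  also have "\<dots> = (LINT u|density lborel (\<lambda>x. ennreal (p x)). conj_poisson_kernel y (x - u))"
    by (simp only: Re_inverse_Complex_minus_of_real)
  also have "\<dots> = (LINT u|lborel. p u * conj_poisson_kernel y (x - u))"
    using nonneg by (subst integral_density) (auto simp: conj_poisson_kernel_def)
  finally show ?thesis .
qed

lemma integral_conj_poisson_kernel_pos:
  fixes p :: "real \<Rightarrow> real"
  assumes p_int: "integrable lborel p" and p_cont: "continuous_on UNIV p"
    and anti: "\<And>s t. \<bar>s\<bar> \<le> \<bar>t\<bar> \<Longrightarrow> p t \<le> p s"
    and "p 0 > 0" "(p \<longlongrightarrow> 0) at_top" "x > 0" "y > 0"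
  shows "0 < (LINT u|lborel. p u * conj_poisson_kernel y (x - u))"
proof -
  define g where "g s = conj_poisson_kernel y s * (p (x - s) - p (x + s))" for s
  obtain j :: nat where j: "p (2 * x * (real j + 1)) < p (2 * x * real j)"
    using tendsto_zero_imp_decrease_on_grid[OF \<open>p 0 > 0\<close> \<open>(p \<longlongrightarrow> 0) at_top\<close>, of "2 * x"]
      \<open>x > 0\<close> by auto
  have "g ((2 * real j + 1) * x) > 0"
  proof -
    have "p (x - (2 * real j + 1) * x) = p (2 * x * real j)"
      using anti[of "x - (2 * real j + 1) * x" "2 * x * real j"]
        anti[of "2 * x * real j" "x - (2 * real j + 1) * x"] \<open>x > 0\<close> by (simp add: algebra_simps)
    moreover have "p (x + (2 * real j + 1) * x) = p (2 * x * (real j + 1))"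
      by (simp add: algebra_simps)
    ultimately show ?thesis
      using j conj_poisson_kernel_pos[of "(2 * real j + 1) * x" y] \<open>x > 0\<close> unfolding g_def by simp
  qed
  moreover have "continuous_on UNIV g"
  proof -
    have "continuous_on UNIV (\<lambda>s. p (x - s))" "continuous_on UNIV (\<lambda>s. p (x + s))"
      using p_cont by (auto intro!: continuous_on_compose2[of UNIV p] continuous_intros)
    thus ?thesis
      using continuous_on_conj_poisson_kernel \<open>y > 0\<close> unfolding g_def by (intro continuous_intros) auto
  qed
  moreover have "0 \<le> g s" for s
    unfolding g_def using anti \<open>x > 0\<close> conj_poisson_kernel_nonneg conj_poisson_kernel_minus
    by (intro odd_kernel_mul_symmetric_difference_nonneg) auto
  moreover note symmetrize = integral_odd_kernel_symmetrize[of p "conj_poisson_kernel y" "1 / y" x,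
      OF p_int borel_measurable_continuous_onI[OF continuous_on_conj_poisson_kernel]
      abs_conj_poisson_kernel_le conj_poisson_kernel_minus, folded g_def]
  ultimately have "0 < (LINT s|lborel. g s)"
    using \<open>y > 0\<close> by (intro integral_pos_if_continuous_nonneg) auto
  thus ?thesis using symmetrize \<open>y > 0\<close> by simp
qed

theorem lemma3:
  fixes p :: "real \<Rightarrow> real" and \<mu> :: "real measure"
  assumes mu_def: "\<mu> = density lborel (\<lambda>x. ennreal (p x))"
    and prob: "prob_space \<mu>"
    and nonneg: "\<And>x. p x \<ge> 0"
    and meas: "p \<in> borel_measurable borel"
    and ac: "locally_abs_cont p"
    and symm: "\<And>x. p x = p (- x)"
    and decr: "AE x in lborel. x > 0 \<longrightarrow>
                 (\<exists>D. (p has_real_derivative D) (at x) \<and> D \<le> 0)"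
    and tail: "((\<lambda>x. p x * ln x) \<longlongrightarrow> 0) at_top"
  shows "\<forall>x>0. \<forall>y>0. Re (cauchy_transform \<mu> (Complex x y)) > 0"
proof (intro allI impI)
  fix x y :: real assume "x > 0" "y > 0"
  note meas[measurable]
  have p_abs: "p \<bar>s\<bar> = p s" for s using symm[of s] by (cases "0 \<le> s") auto
  have anti: "p t \<le> p s" if "\<bar>s\<bar> \<le> \<bar>t\<bar>" for s t
    using locally_abs_cont_antimono_nonneg[OF ac decr abs_ge_zero that] by (simp add: p_abs)
  have mass: "(\<integral>\<^sup>+ u. ennreal (p u) \<partial>lborel) = 1"
    using prob_space.emeasure_space_1[OF prob] unfolding mu_def by (simp add: emeasure_density)
  have "p 0 > 0"
  proof (rule ccontr)
    assume "\<not> p 0 > 0"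
    hence "p u = 0" for u using anti[of 0 u] nonneg[of u] by simp
    thus False using mass by simp
  qed
  moreover have "integrable lborel p" using mass nonneg by (intro integrableI_nonneg) auto
  moreover have "continuous_on UNIV p"
    using locally_abs_cont_imp_isCont[OF ac] by (simp add: continuous_at_imp_continuous_on)
  ultimately have "0 < (LINT u|lborel. p u * conj_poisson_kernel y (x - u))"
    using integral_conj_poisson_kernel_pos anti tendsto_zero_if_mult_ln_tendsto_zero[OF nonneg tail]
      \<open>x > 0\<close> \<open>y > 0\<close> by blast
  moreover have "Re (cauchy_transform \<mu> (Complex x y)) = (LINT u|lborel. p u * conj_poisson_kernel y (x - u))"
    using Re_cauchy_transform_density[OF _ nonneg meas \<open>y > 0\<close>] prob unfolding mu_def by blast
  ultimately show "Re (cauchy_transform \<mu> (Complex x y)) > 0" by simp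
qed

end
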